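(* Let $\mathcal{A}$ be a unital $\mathbb{F}$-algebra of dimension $n\ge2$ and let $S$ be a generating set of $\mathcal{A}$ with $l(S)\ge2$. Let $M=(m_0,\ldots,m_{n-1})$ be the characteristic sequence of $S$, and let $k_1$ be the index with $m_{k_1}=1$ and $m_{k_1+1}>1$. Then there exist a basis $\{e_0,\ldots,e_{n-1}\}$ of $\mathcal{A}$ and functions $t_1,t_2:\{k_1+1,\ldots,n-1\}\to\{1,\ldots,n-1\}$ such that: (1) for every $i\in\{0,\ldots,n-1\}$, $e_i$ is a word in $S$ of length $m_i$; (2a) for every $k$ with $k_1<k<n$, $m_{t_1(k)}+m_{t_2(k)}=m_k$ and $t_1(k),t_2(k)<k$; (2b) for all $h_1,h_2$ with $k_1<h_1<h_2<n$, at least one of $t_1(h_1)<t_1(h_2)$ or $t_2(h_1)<t_2(h_2)$ holds; (3) for every $k$ with $k_1<k<n$, $e_{t_1(k)}e_{t_2(k)}=e_k$; (4) $L_1(S)=\langle e_0,\ldots,e_{k_1}\rangle$.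
   Context: Algebras are finite-dimensional, unital, not necessarily associative, over a field $\mathbb{F}$. For a finite generating set $S$ of $\mathcal{A}$, a word in $S$ is any product (with any bracketing) of finitely many elements of $S$; its length is the number of factors, and $1$ is a word of length $0$. $L_i(S)$ is the linear span of all words in $S$ of length at most $i$ (so $L_0(S)=\mathbb{F}$); $l(S)=\min\{k\ge0: L_k(S)=\mathcal{A}\}$. The characteristic sequence of $S$ is the non-decreasing sequence $(m_0,\ldots,m_{n-1})$ constructed as follows: $m_0=0$; with $s_1=\dim L_1(S)-1$, set $m_1=\cdots=m_{s_1}=1$; inductively, if $m_1,\ldots,m_r$ are defined using $L_1(S),\ldots,L_{k-1}(S)$, put $s_k=\dim L_k(S)-\dim L_{k-1}(S)$ and set $m_{r+1}=\cdots=m_{r+s_k}=k$. (The sequence has $n=\dim\mathcal{A}$ terms.) $\langle\cdot\rangle$ denotes linear span. *)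

theory Defs
  imports Complex_Main
begin

text \<open>A unital, not necessarily associative, algebra over a field 'k, carried by the
  type 'v: scalar multiplication smult, bilinear product mul, unit one.\<close>

definition unital_algebra ::
  "('k::field \<Rightarrow> 'v::ab_group_add \<Rightarrow> 'v) \<Rightarrow> ('v \<Rightarrow> 'v \<Rightarrow> 'v) \<Rightarrow> 'v \<Rightarrow> bool" where
  "unital_algebra smult mul one \<longleftrightarrow>
     Vector_Spaces.vector_space smult \<and>
     (\<forall>x y z. mul (x + y) z = mul x z + mul y z) \<and>
     (\<forall>x y z. mul x (y + z) = mul x y + mul x z) \<and>
     (\<forall>a x y. mul (smult a x) y = smult a (mul x y)) \<and>
     (\<forall>a x y. mul x (smult a y) = smult a (mul x y)) \<and>
     (\<forall>x. mul one x = x \<and> mul x one = x)"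

definition fin_dim :: "('k::field \<Rightarrow> 'v::ab_group_add \<Rightarrow> 'v) \<Rightarrow> bool" where
  "fin_dim smult \<longleftrightarrow> (\<exists>B. finite B \<and> Modules.module.span smult B = UNIV)"

inductive word :: "('v \<Rightarrow> 'v \<Rightarrow> 'v) \<Rightarrow> 'v \<Rightarrow> 'v set \<Rightarrow> 'v \<Rightarrow> nat \<Rightarrow> bool"
  for mul one S where
  word_one: "word mul one S one 0"
| word_gen: "s \<in> S \<Longrightarrow> word mul one S s 1"
| word_mul: "word mul one S u i \<Longrightarrow> word mul one S v j \<Longrightarrow> word mul one S (mul u v) (i + j)"

definition Lspan ::
  "('k::field \<Rightarrow> 'v::ab_group_add \<Rightarrow> 'v) \<Rightarrow> ('v \<Rightarrow> 'v \<Rightarrow> 'v) \<Rightarrow> 'v \<Rightarrow> 'v set \<Rightarrow> nat \<Rightarrow> 'v set" where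
  "Lspan smult mul one S i = Modules.module.span smult {w. \<exists>j\<le>i. word mul one S w j}"

definition generates ::
  "('k::field \<Rightarrow> 'v::ab_group_add \<Rightarrow> 'v) \<Rightarrow> ('v \<Rightarrow> 'v \<Rightarrow> 'v) \<Rightarrow> 'v \<Rightarrow> 'v set \<Rightarrow> bool" where
  "generates smult mul one S \<longleftrightarrow> (\<exists>k. Lspan smult mul one S k = UNIV)"

definition gen_length ::
  "('k::field \<Rightarrow> 'v::ab_group_add \<Rightarrow> 'v) \<Rightarrow> ('v \<Rightarrow> 'v \<Rightarrow> 'v) \<Rightarrow> 'v \<Rightarrow> 'v set \<Rightarrow> nat" where
  "gen_length smult mul one S = (LEAST k. Lspan smult mul one S k = UNIV)"

text \<open>Characteristic sequence: m_i = k exactly when dim L_{k-1} \<le> i < dim L_k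
  (with m_0 = 0), i.e. m_i is the least k with i < dim L_k(S).\<close>
definition char_seq ::
  "('k::field \<Rightarrow> 'v::ab_group_add \<Rightarrow> 'v) \<Rightarrow> ('v \<Rightarrow> 'v \<Rightarrow> 'v) \<Rightarrow> 'v \<Rightarrow> 'v set \<Rightarrow> nat \<Rightarrow> nat" where
  "char_seq smult mul one S i = (LEAST k. i < Vector_Spaces.vector_space.dim smult (Lspan smult mul one S k))"

end

(*
  The basis is built level by level. Level 0 is the unit; level 1 adds those generators that are
  not in the span of the vectors chosen before them. For k >= 2, a word of length k is a product of
  words of lengths i, j >= 1 with i + j = k, and each factor is a combination of basis vectors of
  level at most i, resp. j. Hence L_k(S) is spanned by L_(k-1)(S) and the products e_a e_b of basis
  vectors whose positive levels add up to k, and sifting these products, in lexicographic order of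
  (a, b), against the basis built so far extends it to a basis of L_k(S). Then dim L_k(S) is the
  number of basis vectors of level at most k, so the level of the i-th basis vector is m_i, and
  (a, b) = (t_1(i), t_2(i)). Within one level the pairs (a, b) increase lexicographically; across
  levels, (2b) follows from m_(t_1(k)) + m_(t_2(k)) = m_k and the monotonicity of m.
*)

theory Submission
  imports Defs "HOL-Library.Product_Lexorder"
begin

section \<open>Sifting a list against a span\<close>

fun sift :: "('k::field \<Rightarrow> 'v::ab_group_add \<Rightarrow> 'v) \<Rightarrow> ('a \<Rightarrow> 'v) \<Rightarrow> 'v set \<Rightarrow> 'a list \<Rightarrow> 'a list" where
  "sift smult f B [] = []"
| "sift smult f B (x # xs) =
     (if f x \<in> Modules.module.span smult B then sift smult f B xs
      else x # sift smult f (insert (f x) B) xs)"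

context vector_space
begin

lemma set_sift_subset: "set (sift scale f B xs) \<subseteq> set xs"
  by (induction xs arbitrary: B) auto

lemma sorted_wrt_sift: "sorted_wrt R xs \<Longrightarrow> sorted_wrt R (sift scale f B xs)"
proof (induction xs arbitrary: B)
  case (Cons x xs)
  then show ?case using set_sift_subset[of f _ xs] by auto
qed simp

lemma sift_extends_independent:
  assumes "distinct bs" and "independent (set bs)"
  shows "distinct (bs @ map f (sift scale f (set bs) xs))
    \<and> independent (set bs \<union> f ` set (sift scale f (set bs) xs))
    \<and> span (set bs \<union> f ` set (sift scale f (set bs) xs)) = span (set bs \<union> f ` set xs)"
  using assms
proof (induction xs arbitrary: bs)
  case (Cons x xs)
  show ?case
  proof (cases "f x \<in> span (set bs)")
    case True
    then have "f x \<in> span (set bs \<union> f ` set xs)" using span_mono[of "set bs"] by blast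
    then have "span (set bs \<union> f ` set (x # xs)) = span (set bs \<union> f ` set xs)"
      using span_redundant by simp
    with True Cons show ?thesis by simp
  next
    case False
    then have "distinct (bs @ [f x])" "independent (set (bs @ [f x]))"
      using Cons.prems span_base independent_insertI by auto
    note IH = Cons.IH[OF this]
    have "sift scale f (set bs) (x # xs) = x # sift scale f (set (bs @ [f x])) xs"
      using False by simp
    with IH show ?thesis by (simp add: Un_insert_right)
  qed
qed simp

lemma dim_span_distinct_independent:
  "distinct bs \<Longrightarrow> independent (set bs) \<Longrightarrow> dim (span (set bs)) = length bs"
  using dim_span_eq_card_independent[of "set bs"] distinct_card[of bs] by simp

lemma span_Un_span: "span (span A \<union> B) = span (A \<union> B)"
proof -
  have "span A \<union> B \<subseteq> span (A \<union> B)"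
    using span_mono[of A "A \<union> B"] span_superset[of "A \<union> B"] by blast
  moreover have "A \<union> B \<subseteq> span (span A \<union> B)"
    using span_superset[of A] span_superset[of "span A \<union> B"] by blast
  ultimately show ?thesis unfolding span_eq by blast
qed

end

locale unital_alg = vector_space smult for smult :: "'k::field \<Rightarrow> 'v::ab_group_add \<Rightarrow> 'v" +
  fixes mul :: "'v \<Rightarrow> 'v \<Rightarrow> 'v" and one :: 'v
  assumes mul_add_left: "mul (x + y) z = mul x z + mul y z"
    and mul_add_right: "mul x (y + z) = mul x y + mul x z"
    and mul_smult_left: "mul (smult a x) y = smult a (mul x y)"
    and mul_smult_right: "mul x (smult a y) = smult a (mul x y)"
    and mul_one_left: "mul one x = x"
    and mul_one_right: "mul x one = x"
begin

lemma mul_zero_left [simp]: "mul 0 y = 0"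
  using mul_add_left[of 0 0 y] by simp

lemma mul_zero_right [simp]: "mul x 0 = 0"
  using mul_add_right[of x 0 0] by simp

lemma mul_in_span_products:
  assumes "x \<in> span A" and "y \<in> span B"
  shows "mul x y \<in> span {mul a b | a b. a \<in> A \<and> b \<in> B}"
proof -
  let ?P = "{mul a b | a b. a \<in> A \<and> b \<in> B}"
  have left_generator: "mul a y \<in> span ?P" if "a \<in> A" and "y \<in> span B" for a y
    using \<open>y \<in> span B\<close>
  proof (induction rule: span_induct)
    case base
    show ?case unfolding subspace_def
      by (auto simp: mul_add_right mul_smult_right intro: span_add span_scale span_zero)
  qed (use \<open>a \<in> A\<close> in \<open>auto intro: span_base\<close>)
  show ?thesis using \<open>x \<in> span A\<close>
  proof (induction rule: span_induct)
    case base
    show ?case unfolding subspace_def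
      by (auto simp: mul_add_left mul_smult_left intro: span_add span_scale span_zero)
  qed (use left_generator \<open>y \<in> span B\<close> in blast)
qed

lemma one_neq_zero_if_dim_nonzero:
  assumes "dim (UNIV :: 'v set) \<noteq> 0"
  shows "one \<noteq> 0"
proof
  assume "one = 0"
  then have "(x :: 'v) = 0" for x using mul_one_left[of x] by simp
  then have "(UNIV :: 'v set) = span {}" by (auto simp: span_empty)
  then have "dim (UNIV :: 'v set) = card {}"
    using dim_span_eq_card_independent[OF independent_empty] by simp
  then show False using assms by simp
qed

end

section \<open>Words and the filtration by length\<close>

(* A basis vector together with its level, i.e. its term of the characteristic sequence, and
   the positions (a, b) of the two earlier basis vectors of which it is the product
   (from level 2 on). *)
datatype 'v entry = Entry (vec: 'v) (level: nat) (tags: "nat \<times> nat")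

definition level_pairs :: "nat \<Rightarrow> 'v entry list \<Rightarrow> (nat \<times> nat) set" where
  "level_pairs k P = {(a, b). a < length P \<and> b < length P \<and> 0 < level (P ! a) \<and> 0 < level (P ! b)
     \<and> level (P ! a) + level (P ! b) = k}"

lemma finite_level_pairs: "finite (level_pairs k P)"
  by (rule finite_subset[of _ "{..<length P} \<times> {..<length P}"]) (auto simp: level_pairs_def)

locale unital_alg_gens = unital_alg smult mul one
  for smult :: "'k::field \<Rightarrow> 'v::ab_group_add \<Rightarrow> 'v" and mul and one +
  fixes gens :: "'v list"
  assumes one_nonzero: "one \<noteq> 0"
begin

abbreviation is_word :: "'v \<Rightarrow> nat \<Rightarrow> bool" where
  "is_word w j \<equiv> word mul one (set gens) w j"

abbreviation L :: "nat \<Rightarrow> 'v set" where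
  "L i \<equiv> Lspan smult mul one (set gens) i"

abbreviation m :: "nat \<Rightarrow> nat" where
  "m i \<equiv> char_seq smult mul one (set gens) i"

lemma word_0: "is_word w 0 \<Longrightarrow> w = one"
proof (induction w "0::nat" rule: word.induct)
  case (word_mul u i v j)
  then show ?case using mul_one_left by simp
qed auto

lemma word_1: "is_word w 1 \<Longrightarrow> w \<in> set gens"
proof (induction w "1::nat" rule: word.induct)
  case (word_mul u i v j)
  then show ?case by (auto simp: add_is_1 mul_one_left mul_one_right dest: word_0)
qed auto

lemma word_in_L: "is_word w j \<Longrightarrow> j \<le> i \<Longrightarrow> w \<in> L i"
  unfolding Lspan_def by (auto intro: span_base)

lemma L_mono: "i \<le> j \<Longrightarrow> L i \<subseteq> L j"
  unfolding Lspan_def by (rule span_mono) (auto intro: le_trans)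

lemma L_0: "L 0 = span {one}"
proof -
  have "{w. \<exists>j\<le>0. is_word w j} = {one}" using word_0 word_one by auto
  then show ?thesis unfolding Lspan_def by simp
qed

lemma L_1: "L 1 = span (insert one (set gens))"
proof -
  have "{w. \<exists>j\<le>1. is_word w j} = insert one (set gens)"
  proof (intro equalityI subsetI)
    fix w assume "w \<in> {w. \<exists>j\<le>1. is_word w j}"
    then obtain j where "j \<le> 1" "is_word w j" by blast
    moreover have "j = 0 \<or> j = 1" using \<open>j \<le> 1\<close> by linarith
    ultimately consider "is_word w 0" | "is_word w 1" by blast
    then show "w \<in> insert one (set gens)"
      by cases (simp_all add: word_0 word_1)
  next
    fix w assume "w \<in> insert one (set gens)"
    then consider "w = one" | "w \<in> set gens" by blast
    then have "is_word w 0 \<or> is_word w 1" by cases (blast intro: word_one word_gen)+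
    then show "w \<in> {w. \<exists>j\<le>1. is_word w j}" by auto
  qed
  then show ?thesis unfolding Lspan_def by simp
qed

definition level_products :: "nat \<Rightarrow> 'v entry list \<Rightarrow> 'v set" where
  "level_products k P = (\<lambda>(a, b). mul (vec (P ! a)) (vec (P ! b))) ` level_pairs k P"

lemma L_eq_span_split_words:
  assumes "2 \<le> k"
  shows "L k = span (L (k - 1)
    \<union> {mul u v | u v. \<exists>i j. is_word u i \<and> is_word v j \<and> 0 < i \<and> 0 < j \<and> i + j = k})"
    (is "_ = span (_ \<union> ?W)")
proof
  let ?T = "span (L (k - 1) \<union> ?W)"
  have L_T: "L (k - 1) \<subseteq> ?T" and W_T: "?W \<subseteq> ?T"
    using span_superset[of "L (k - 1) \<union> ?W"] by auto
  have short_word: "w \<in> ?T" if "is_word w j" "j < k" for w j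
    using word_in_L[OF that(1), of "k - 1"] that(2) L_T by auto
  have "w \<in> ?T" if "is_word w j" "j \<le> k" for w j
    using that
  proof (induction rule: word.induct)
    case word_one
    show ?case using short_word[OF word.word_one] \<open>2 \<le> k\<close> by simp
  next
    case (word_gen s)
    then show ?case using short_word[OF word.word_gen] \<open>2 \<le> k\<close> by simp
  next
    case (word_mul u i v j)
    consider "i + j < k" | "i = 0" | "j = 0" | "0 < i" "0 < j" "i + j = k"
      using word_mul.prems by linarith
    then show ?case
    proof cases
      case 1
      then show ?thesis using short_word word.word_mul[OF word_mul.hyps] by blast
    next
      case 2
      with word_mul.hyps(1) have "u = one" by (auto dest: word_0)
      with 2 word_mul show ?thesis by (simp add: mul_one_left)
    next
      case 3
      with word_mul.hyps(2) have "v = one" by (auto dest: word_0)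
      with 3 word_mul show ?thesis by (simp add: mul_one_right)
    next
      case 4
      then show ?thesis using W_T word_mul.hyps by blast
    qed
  qed
  then show "L k \<subseteq> ?T" unfolding Lspan_def[of _ _ _ _ k]
    by (intro span_minimal subspace_span) auto
next
  have "?W \<subseteq> L k" by (auto intro: word_in_L word.word_mul)
  moreover have "L (k - 1) \<subseteq> L k" by (rule L_mono) simp
  ultimately show "span (L (k - 1) \<union> ?W) \<subseteq> L k"
    unfolding Lspan_def[of _ _ _ _ k] by (simp add: span_minimal)
qed

lemma entry_product_in_span:
  assumes words: "\<And>e. e \<in> set P \<Longrightarrow> is_word (vec e) (level e)"
    and mem: "e \<in> set P" "e' \<in> set P"
    and lev: "level e < k" "level e' < k" "level e + level e' \<le> k"
  shows "mul (vec e) (vec e') \<in> span (L (k - 1) \<union> level_products k P)"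
    (is "_ \<in> ?T")
proof -
  have short_word: "w \<in> ?T" if "is_word w j" "j < k" for w j
    using word_in_L[OF that(1), of "k - 1"] that(2)
      span_superset[of "L (k - 1) \<union> level_products k P"]
    by auto
  have w: "is_word (vec e) (level e)" "is_word (vec e') (level e')" using words mem by auto
  consider "level e = 0" | "level e' = 0" | "level e + level e' < k"
    | "0 < level e" "0 < level e'" "level e + level e' = k"
    using lev(3) by linarith
  then show ?thesis
  proof cases
    case 1
    with w(1) have "vec e = one" by (auto dest: word_0)
    with short_word[OF w(2) lev(2)] show ?thesis by (simp add: mul_one_left)
  next
    case 2
    with w(2) have "vec e' = one" by (auto dest: word_0)
    with short_word[OF w(1) lev(1)] show ?thesis by (simp add: mul_one_right)
  next
    case 3
    then show ?thesis using short_word[OF word.word_mul[OF w]] by blast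
  next
    case 4
    from mem obtain a b where a: "a < length P" "P ! a = e" and b: "b < length P" "P ! b = e'"
      by (auto simp: in_set_conv_nth)
    with 4 have "(a, b) \<in> level_pairs k P" unfolding level_pairs_def by auto
    then have "mul (vec e) (vec e') \<in> level_products k P"
      unfolding level_products_def using a b by (auto intro: rev_image_eqI)
    then show ?thesis using span_superset by blast
  qed
qed

lemma L_eq_span_products:
  assumes "2 \<le> k"
    and words: "\<And>e. e \<in> set P \<Longrightarrow> is_word (vec e) (level e)"
    and lower: "\<And>i. 1 \<le> i \<Longrightarrow> i < k \<Longrightarrow> L i = span (vec ` {e \<in> set P. level e \<le> i})"
  shows "L k = span (L (k - 1) \<union> level_products k P)"
proof
  let ?T = "span (L (k - 1) \<union> level_products k P)"
  have "mul u v \<in> ?T" if "is_word u i" "is_word v j" "0 < i" "0 < j" "i + j = k" for u v i j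
  proof -
    let ?E = "\<lambda>i. vec ` {e \<in> set P. level e \<le> i}"
    have "u \<in> span (?E i)" using lower[of i] word_in_L[OF that(1) order_refl] that by simp
    moreover have "v \<in> span (?E j)" using lower[of j] word_in_L[OF that(2) order_refl] that by simp
    ultimately have "mul u v \<in> span {mul x y | x y. x \<in> ?E i \<and> y \<in> ?E j}"
      by (rule mul_in_span_products)
    moreover have "{mul x y | x y. x \<in> ?E i \<and> y \<in> ?E j} \<subseteq> ?T"
    proof clarify
      fix e e' assume "e \<in> set P" "level e \<le> i" "e' \<in> set P" "level e' \<le> j"
      with that(3-5) show "mul (vec e) (vec e') \<in> ?T" by (intro entry_product_in_span words) auto
    qed
    ultimately show ?thesis using span_minimal[OF _ subspace_span] by blast
  qed
  then have "span (L (k - 1) \<union> {mul u v | u v. \<exists>i j. is_word u i \<and> is_word v j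
      \<and> 0 < i \<and> 0 < j \<and> i + j = k}) \<subseteq> ?T"
    using span_superset[of "L (k - 1) \<union> level_products k P"]
    by (intro span_minimal subspace_span) auto
  then show "L k \<subseteq> ?T" using L_eq_span_split_words[OF \<open>2 \<le> k\<close>] by simp
next
  have "level_products k P \<subseteq> L k"
    unfolding level_products_def
  proof clarify
    fix a b assume "(a, b) \<in> level_pairs k P"
    then have "a < length P" "b < length P" "level (P ! a) + level (P ! b) = k"
      by (auto simp: level_pairs_def)
    then have "is_word (mul (vec (P ! a)) (vec (P ! b))) k"
      using word.word_mul[OF words words] by (metis nth_mem)
    then show "mul (vec (P ! a)) (vec (P ! b)) \<in> L k" by (rule word_in_L) simp
  qed
  moreover have "L (k - 1) \<subseteq> L k" by (rule L_mono) simp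
  ultimately show "span (L (k - 1) \<union> level_products k P) \<subseteq> L k"
    unfolding Lspan_def[of _ _ _ _ k] by (simp add: span_minimal)
qed

section \<open>The level-by-level basis\<close>

(* Level-1 candidates are the generators; at level k >= 2 they are the
   products e_a e_b with positive levels adding up to k, taken in lexicographic order of (a, b). *)
definition candidates :: "nat \<Rightarrow> 'v entry list \<Rightarrow> ('v \<times> nat \<times> nat) list" where
  "candidates k P =
     (if k = 1 then map (\<lambda>s. (s, 0, 0)) gens
      else map (\<lambda>(a, b). (mul (vec (P ! a)) (vec (P ! b)), a, b))
             (sorted_list_of_set (level_pairs k P)))"

definition new_entries :: "nat \<Rightarrow> 'v entry list \<Rightarrow> 'v entry list" where
  "new_entries k P = map (\<lambda>(v, p). Entry v k p) (sift smult fst (vec ` set P) (candidates k P))"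

primrec stage :: "nat \<Rightarrow> 'v entry list" where
  "stage 0 = [Entry one 0 (0, 0)]"
| "stage (Suc k) = stage k @ new_entries (Suc k) (stage k)"

lemma set_new_entriesE:
  assumes "e \<in> set (new_entries k P)"
  obtains v p where "(v, p) \<in> set (candidates k P)" and "e = Entry v k p"
  using assms set_sift_subset unfolding new_entries_def by fastforce

lemma level_new_entries: "e \<in> set (new_entries k P) \<Longrightarrow> level e = k"
  by (auto elim: set_new_entriesE)

lemma candidate_product:
  assumes "k \<noteq> 1" and "(v, p) \<in> set (candidates k P)"
  shows "p \<in> level_pairs k P \<and> v = mul (vec (P ! fst p)) (vec (P ! snd p))"
  using assms by (auto simp: candidates_def finite_level_pairs)

lemma candidate_word:
  assumes "\<And>e. e \<in> set P \<Longrightarrow> is_word (vec e) (level e)" and "(v, p) \<in> set (candidates k P)"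
  shows "is_word v k"
proof (cases "k = 1")
  case True
  with assms(2) have "v \<in> set gens" by (auto simp: candidates_def)
  then show ?thesis unfolding True by (rule word_gen)
next
  case False
  then have "p \<in> level_pairs k P" and v: "v = mul (vec (P ! fst p)) (vec (P ! snd p))"
    using candidate_product assms(2) by auto
  then have "fst p < length P" "snd p < length P" "level (P ! fst p) + level (P ! snd p) = k"
    by (auto simp: level_pairs_def)
  then show ?thesis unfolding v using word_mul[OF assms(1) assms(1)] by (metis nth_mem)
qed

lemma sorted_tags_new_entries:
  assumes "k \<noteq> 1"
  shows "sorted_wrt (<) (map tags (new_entries k P))"
proof -
  have "sorted_wrt (\<lambda>x y. snd x < snd y) (candidates k P)"
    using assms by (simp add: candidates_def sorted_wrt_map case_prod_beta)
  then have "sorted_wrt (\<lambda>x y. snd x < snd y) (sift smult fst (vec ` set P) (candidates k P))"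
    by (rule sorted_wrt_sift)
  then show ?thesis by (simp add: new_entries_def sorted_wrt_map case_prod_beta)
qed

lemma stage_prefix: "j \<le> k \<Longrightarrow> \<exists>zs. stage k = stage j @ zs"
  by (induction k rule: dec_induct) auto

lemma length_stage_mono: "j \<le> k \<Longrightarrow> length (stage j) \<le> length (stage k)"
  using stage_prefix by fastforce

lemma nth_stage: "j \<le> k \<Longrightarrow> i < length (stage j) \<Longrightarrow> stage k ! i = stage j ! i"
  using stage_prefix by (fastforce simp: nth_append)

lemma nth_stage_Suc_new:
  assumes "length (stage k) \<le> i" and "i < length (stage (Suc k))"
  shows "stage (Suc k) ! i \<in> set (new_entries (Suc k) (stage k))"
  using assms by (simp add: nth_append)

lemma level_stage_Suc_new:
  "length (stage k) \<le> i \<Longrightarrow> i < length (stage (Suc k)) \<Longrightarrow> level (stage (Suc k) ! i) = Suc k"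
  by (rule level_new_entries[OF nth_stage_Suc_new])

lemma level_stage_le_iff:
  "i < length (stage k) \<Longrightarrow> level (stage k ! i) \<le> j \<longleftrightarrow> i < length (stage j)"
proof (induction k arbitrary: i)
  case 0
  then show ?case using length_stage_mono[of 0 j] by fastforce
next
  case (Suc k)
  show ?case
  proof (cases "i < length (stage k)")
    case True
    then show ?thesis using Suc.IH by (simp add: nth_append)
  next
    case False
    have "level (stage (Suc k) ! i) = Suc k"
      by (rule level_stage_Suc_new) (use False Suc.prems in simp_all)
    moreover have "i < length (stage j)" if "Suc k \<le> j"
      using Suc.prems length_stage_mono[OF that] by simp
    moreover have "length (stage j) \<le> i" if "j \<le> k"
      using False length_stage_mono[OF that] by simp
    ultimately show ?thesis by (cases "Suc k \<le> j") auto
  qed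
qed

lemma level_stage_mono:
  "i \<le> i' \<Longrightarrow> i' < length (stage k) \<Longrightarrow> level (stage k ! i) \<le> level (stage k ! i')"
  using level_stage_le_iff by (metis le_refl order.strict_trans1)

lemma set_stage_eq: "j \<le> k \<Longrightarrow> set (stage j) = {e \<in> set (stage k). level e \<le> j}"
proof safe
  fix e assume "j \<le> k" "e \<in> set (stage j)"
  then obtain i where i: "i < length (stage j)" "e = stage j ! i" by (auto simp: in_set_conv_nth)
  then show "level e \<le> j" using level_stage_le_iff by simp
  have "e = stage k ! i" "i < length (stage k)"
    using i \<open>j \<le> k\<close> nth_stage length_stage_mono by fastforce+
  then show "e \<in> set (stage k)" by simp
next
  fix e assume "j \<le> k" "e \<in> set (stage k)" "level e \<le> j"
  then obtain i where i: "i < length (stage k)" "e = stage k ! i" by (auto simp: in_set_conv_nth)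
  with \<open>level e \<le> j\<close> have "i < length (stage j)" using level_stage_le_iff by blast
  with i show "e \<in> set (stage j)" using nth_stage[OF \<open>j \<le> k\<close>] by simp
qed

lemma stage_words: "e \<in> set (stage k) \<Longrightarrow> is_word (vec e) (level e)"
proof (induction k arbitrary: e)
  case 0
  then show ?case by (simp add: word_one)
next
  case (Suc k)
  from Suc.prems consider "e \<in> set (stage k)" | "e \<in> set (new_entries (Suc k) (stage k))"
    by auto
  then show ?case
  proof cases
    case 2
    then obtain v p where "(v, p) \<in> set (candidates (Suc k) (stage k))" "e = Entry v (Suc k) p"
      by (rule set_new_entriesE)
    then show ?thesis using candidate_word[OF Suc.IH] by simp
  qed (rule Suc.IH)
qed

lemma span_candidates:
  assumes words: "\<And>e. e \<in> set P \<Longrightarrow> is_word (vec e) (level e)"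
    and lower: "\<And>i. 1 \<le> i \<Longrightarrow> i \<le> k \<Longrightarrow> L i = span (vec ` {e \<in> set P. level e \<le> i})"
  shows "L (Suc k) = span (L k \<union> fst ` set (candidates (Suc k) P))"
proof (cases k)
  case 0
  have "fst ` set (candidates 1 P) = set gens" by (force simp: candidates_def)
  then show ?thesis using 0 L_1 by (simp add: L_0 span_Un_span One_nat_def)
next
  case (Suc k')
  have "fst ` set (candidates (Suc k) P) = level_products (Suc k) P"
    using Suc by (force simp: candidates_def level_products_def finite_level_pairs)
  moreover have "L (Suc k) = span (L k \<union> level_products (Suc k) P)"
    using L_eq_span_products[of "Suc k" P] words lower Suc by simp
  ultimately show ?thesis by simp
qed

lemma stage_basis:
  "distinct (map vec (stage k)) \<and> independent (vec ` set (stage k))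
    \<and> span (vec ` set (stage k)) = L k"
proof (induction k rule: less_induct)
  case (less k)
  show ?case
  proof (cases k)
    case 0
    then show ?thesis using one_nonzero by (simp add: L_0)
  next
    case (Suc k')
    define P where "P = stage k'"
    define C where "C = candidates k P"
    from less[of k'] have IH: "distinct (map vec P)" "independent (set (map vec P))"
      "span (vec ` set P) = L k'"
      using Suc by (simp_all add: P_def)
    have vecs: "map vec (stage k) = map vec P @ map fst (sift smult fst (vec ` set P) C)"
      by (simp add: Suc P_def C_def new_entries_def comp_def case_prod_beta)
    then have vec_set:
        "vec ` set (stage k) = vec ` set P \<union> fst ` set (sift smult fst (vec ` set P) C)"
      by (metis image_Un list.set_map set_append)
    have "L i = span (vec ` {e \<in> set P. level e \<le> i})" if "i \<le> k'" for i
      using less[of i] that set_stage_eq[OF that] Suc by (simp add: P_def)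
    then have "L k = span (L k' \<union> fst ` set C)"
      using span_candidates[OF stage_words] Suc by (simp add: P_def C_def)
    also have "\<dots> = span (vec ` set P \<union> fst ` set C)"
      using IH(3) span_Un_span[of "vec ` set P" "fst ` set C"] by simp
    finally show ?thesis
      using sift_extends_independent[OF IH(1,2), of fst C] unfolding vecs vec_set by simp
  qed
qed

lemma dim_L_stage: "dim (L k) = length (stage k)"
  using stage_basis[of k] dim_span_distinct_independent[of "map vec (stage k)"] by simp

lemma char_seq_stage:
  assumes "i < length (stage k)"
  shows "m i = level (stage k ! i)"
  unfolding char_seq_def dim_L_stage
proof (rule Least_equality)
  show "i < length (stage (level (stage k ! i)))"
    using level_stage_le_iff[OF assms, of "level (stage k ! i)"] by simp
  show "level (stage k ! i) \<le> j" if "i < length (stage j)" for j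
    using level_stage_le_iff[OF assms] that by simp
qed

lemma level_stage_0: "level (stage k ! 0) = 0"
  using nth_stage[of 0 k 0] by simp

lemma stage_tags:
  assumes "i < length (stage k)" and "2 \<le> level (stage k ! i)" and "tags (stage k ! i) = (a, b)"
  shows "0 < a \<and> a < i \<and> 0 < b \<and> b < i
    \<and> level (stage k ! a) + level (stage k ! b) = level (stage k ! i)
    \<and> mul (vec (stage k ! a)) (vec (stage k ! b)) = vec (stage k ! i)"
  using assms
proof (induction k arbitrary: i)
  case 0
  then show ?case by simp
next
  case (Suc k)
  let ?P = "stage k"
  show ?case
  proof (cases "i < length ?P")
    case True
    with Suc have "0 < a \<and> a < i \<and> 0 < b \<and> b < i
      \<and> level (?P ! a) + level (?P ! b) = level (?P ! i)
      \<and> mul (vec (?P ! a)) (vec (?P ! b)) = vec (?P ! i)"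
      by (simp add: nth_append)
    with True show ?thesis by (simp add: nth_append)
  next
    case False
    have "stage (Suc k) ! i \<in> set (new_entries (Suc k) ?P)"
      by (rule nth_stage_Suc_new) (use False Suc.prems(1) in simp_all)
    then obtain v p where cand: "(v, p) \<in> set (candidates (Suc k) ?P)"
      and e: "stage (Suc k) ! i = Entry v (Suc k) p"
      by (rule set_new_entriesE)
    with Suc.prems have "Suc k \<noteq> 1" "p = (a, b)" by auto
    with candidate_product[OF this(1) cand] have "(a, b) \<in> level_pairs (Suc k) ?P"
      and v: "v = mul (vec (?P ! a)) (vec (?P ! b))" by auto
    then have ab: "a < length ?P" "b < length ?P" "0 < level (?P ! a)" "0 < level (?P ! b)"
      "level (?P ! a) + level (?P ! b) = Suc k"
      by (auto simp: level_pairs_def)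
    have "a \<noteq> 0" "b \<noteq> 0" using ab(3,4) level_stage_0[of k] by (metis less_irrefl)+
    with ab False e v show ?thesis by (simp add: nth_append)
  qed
qed

lemma stage_tags_sorted:
  assumes "i < j" and "j < length (stage k)"
    and "level (stage k ! i) = level (stage k ! j)" and "2 \<le> level (stage k ! j)"
  shows "tags (stage k ! i) < tags (stage k ! j)"
  using assms
proof (induction k arbitrary: i j)
  case 0
  then show ?case by simp
next
  case (Suc k)
  let ?P = "stage k" and ?N = "new_entries (Suc k) (stage k)"
  consider "j < length ?P" | "i < length ?P" "length ?P \<le> j" | "length ?P \<le> i"
    by linarith
  then show ?case
  proof cases
    case 1
    with Suc show ?thesis by (simp add: nth_append)
  next
    case 2
    have "level (stage (Suc k) ! j) = Suc k"
      using 2 Suc.prems(2) by (intro level_stage_Suc_new)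
    moreover have "level (stage (Suc k) ! i) \<le> k"
      using 2 level_stage_le_iff[of i k k] by (simp add: nth_append)
    ultimately show ?thesis using Suc.prems(3) by simp
  next
    case 3
    have lev: "level (stage (Suc k) ! j) = Suc k"
      using 3 Suc.prems by (intro level_stage_Suc_new) auto
    have "sorted_wrt (<) (map tags ?N)"
      using Suc.prems(4) lev by (intro sorted_tags_new_entries) simp
    then have "tags (?N ! (i - length ?P)) < tags (?N ! (j - length ?P))"
      using 3 Suc.prems(1,2) by (auto simp: sorted_wrt_iff_nth_less)
    then show ?thesis using 3 Suc.prems(1) by (simp add: nth_append)
  qed
qed

lemma stage_tags_lex:
  assumes "h < h'" and "h' < length (stage k)" and "2 \<le> level (stage k ! h)"
  shows "fst (tags (stage k ! h)) < fst (tags (stage k ! h'))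
    \<or> snd (tags (stage k ! h)) < snd (tags (stage k ! h'))"
proof -
  obtain a b a' b' where ab: "tags (stage k ! h) = (a, b)" and ab': "tags (stage k ! h') = (a', b')"
    by (meson surj_pair)
  have lev: "level (stage k ! h) \<le> level (stage k ! h')"
    using assms by (intro level_stage_mono) auto
  show ?thesis
  proof (cases "level (stage k ! h) = level (stage k ! h')")
    case True
    then have "(a, b) < (a', b')" using stage_tags_sorted assms ab ab' by fastforce
    then show ?thesis using ab ab' by (auto simp: less_prod_def)
  next
    case False
    have t: "a < h" "b < h" "level (stage k ! a) + level (stage k ! b) = level (stage k ! h)"
      using stage_tags[OF _ assms(3) ab] assms by auto
    have t': "level (stage k ! a') + level (stage k ! b') = level (stage k ! h')"
      using stage_tags[OF assms(2) _ ab'] assms lev by auto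
    show ?thesis
    proof (rule ccontr)
      assume "\<not> ?thesis"
      then have "a' \<le> a" "b' \<le> b" using ab ab' by auto
      then have "level (stage k ! a') \<le> level (stage k ! a)"
        and "level (stage k ! b') \<le> level (stage k ! b)"
        using t assms by (auto intro!: level_stage_mono)
      then show False using t t' lev False by linarith
    qed
  qed
qed

lemma image_vec_nth_stage:
  "j \<le> k \<Longrightarrow> (\<lambda>i. vec (stage k ! i)) ` {..<length (stage j)} = vec ` set (stage j)"
  using nth_stage by (force simp: in_set_conv_nth)

lemma inj_on_vec_nth_stage: "inj_on (\<lambda>i. vec (stage k ! i)) {..<length (stage k)}"
  using stage_basis[of k] inj_on_nth[of "map vec (stage k)" "{..<length (stage k)}"]
  by (simp add: inj_on_def)

theorem characteristic_basis:
  assumes "L K = UNIV" and n_def: "n = dim (UNIV :: 'v set)"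
    and k1: "k1 + 1 < n" "m k1 = 1" "m (k1 + 1) > 1"
  shows "\<exists>(e :: nat \<Rightarrow> 'v) (t1 :: nat \<Rightarrow> nat) (t2 :: nat \<Rightarrow> nat).
     inj_on e {..<n} \<and> \<not> dependent (e ` {..<n}) \<and> span (e ` {..<n}) = UNIV \<and>
     (\<forall>k. k1 < k \<and> k < n \<longrightarrow> t1 k \<in> {1..n-1} \<and> t2 k \<in> {1..n-1}) \<and>
     (\<forall>i<n. is_word (e i) (m i)) \<and>
     (\<forall>k. k1 < k \<and> k < n \<longrightarrow> m (t1 k) + m (t2 k) = m k \<and> t1 k < k \<and> t2 k < k) \<and>
     (\<forall>h1 h2. k1 < h1 \<and> h1 < h2 \<and> h2 < n \<longrightarrow> t1 h1 < t1 h2 \<or> t2 h1 < t2 h2) \<and>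
     (\<forall>k. k1 < k \<and> k < n \<longrightarrow> mul (e (t1 k)) (e (t2 k)) = e k) \<and>
     L 1 = span (e ` {..k1})"
proof -
  let ?P = "stage K"
  define e where "e i = vec (?P ! i)" for i
  define t1 where "t1 i = fst (tags (?P ! i))" for i
  define t2 where "t2 i = snd (tags (?P ! i))" for i
  have n: "n = length ?P" using n_def \<open>L K = UNIV\<close> dim_L_stage[of K] by simp
  have m: "m i = level (?P ! i)" if "i < n" for i using char_seq_stage that n by simp
  have stage_1: "length (stage 1) = k1 + 1"
    using level_stage_le_iff[of k1 K 1] level_stage_le_iff[of "k1 + 1" K 1] k1 m n by simp
  have level_2: "2 \<le> level (?P ! k)" if "k1 < k" "k < n" for k
    using level_stage_le_iff[of k K 1] stage_1 that n by simp
  have tags: "0 < t1 k \<and> t1 k < k \<and> 0 < t2 k \<and> t2 k < k \<and> m (t1 k) + m (t2 k) = m k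
      \<and> mul (e (t1 k)) (e (t2 k)) = e k" if "k1 < k" "k < n" for k
    using stage_tags[of k K "t1 k" "t2 k"] level_2[OF that] that m n
    unfolding e_def t1_def t2_def by auto
  have e_image: "e ` {..<length (stage j)} = vec ` set (stage j)" if "j \<le> K" for j
    unfolding e_def using image_vec_nth_stage[OF that] .
  have "1 \<le> K" using stage_1 k1(1) n by (cases K) auto
  have "inj_on e {..<n}" unfolding e_def n by (rule inj_on_vec_nth_stage)
  moreover have "\<not> dependent (e ` {..<n})" "span (e ` {..<n}) = UNIV"
    using stage_basis[of K] e_image[of K] n \<open>L K = UNIV\<close> by simp_all
  moreover have "\<forall>k. k1 < k \<and> k < n \<longrightarrow> t1 k \<in> {1..n-1} \<and> t2 k \<in> {1..n-1}"
    using tags by fastforce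
  moreover have "\<forall>i<n. is_word (e i) (m i)"
    using stage_words[OF nth_mem] m n unfolding e_def by simp
  moreover have "\<forall>k. k1 < k \<and> k < n \<longrightarrow> m (t1 k) + m (t2 k) = m k \<and> t1 k < k \<and> t2 k < k"
    using tags by blast
  moreover have "\<forall>h1 h2. k1 < h1 \<and> h1 < h2 \<and> h2 < n \<longrightarrow> t1 h1 < t1 h2 \<or> t2 h1 < t2 h2"
  proof (intro allI impI)
    fix h1 h2 assume "k1 < h1 \<and> h1 < h2 \<and> h2 < n"
    then show "t1 h1 < t1 h2 \<or> t2 h1 < t2 h2"
      using stage_tags_lex[of h1 h2 K] level_2[of h1] n unfolding t1_def t2_def by simp
  qed
  moreover have "\<forall>k. k1 < k \<and> k < n \<longrightarrow> mul (e (t1 k)) (e (t2 k)) = e k"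
    using tags by blast
  moreover have "L 1 = span (e ` {..k1})"
    using stage_basis[of 1] e_image[OF \<open>1 \<le> K\<close>] stage_1 lessThan_Suc_atMost by simp
  ultimately show ?thesis by (intro exI[of _ e] exI[of _ t1] exI[of _ t2] conjI)
qed

end

theorem proposition5p6:
  fixes smult :: "'k::field \<Rightarrow> 'v::ab_group_add \<Rightarrow> 'v"
    and mul :: "'v \<Rightarrow> 'v \<Rightarrow> 'v" and one :: 'v
    and S :: "'v set" and n k1 :: nat
  assumes alg: "unital_algebra smult mul one"
    and fd: "fin_dim smult"
    and n_def: "n = Vector_Spaces.vector_space.dim smult (UNIV :: 'v set)"
    and n2: "n \<ge> 2"
    and finS: "finite S"
    and gen: "generates smult mul one S"
    and l2: "gen_length smult mul one S \<ge> 2"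
    and k1: "k1 + 1 < n" "char_seq smult mul one S k1 = 1"
            "char_seq smult mul one S (k1 + 1) > 1"
  shows "\<exists>(e :: nat \<Rightarrow> 'v) (t1 :: nat \<Rightarrow> nat) (t2 :: nat \<Rightarrow> nat).
     inj_on e {..<n} \<and>
     \<not> Modules.module.dependent smult (e ` {..<n}) \<and>
     Modules.module.span smult (e ` {..<n}) = UNIV \<and>
     (\<forall>k. k1 < k \<and> k < n \<longrightarrow> t1 k \<in> {1..n-1} \<and> t2 k \<in> {1..n-1}) \<and>
     (\<forall>i<n. word mul one S (e i) (char_seq smult mul one S i)) \<and>
     (\<forall>k. k1 < k \<and> k < n \<longrightarrow>
        char_seq smult mul one S (t1 k) + char_seq smult mul one S (t2 k)
          = char_seq smult mul one S k \<and> t1 k < k \<and> t2 k < k) \<and>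
     (\<forall>h1 h2. k1 < h1 \<and> h1 < h2 \<and> h2 < n \<longrightarrow> t1 h1 < t1 h2 \<or> t2 h1 < t2 h2) \<and>
     (\<forall>k. k1 < k \<and> k < n \<longrightarrow> mul (e (t1 k)) (e (t2 k)) = e k) \<and>
     Lspan smult mul one S 1 = Modules.module.span smult (e ` {..k1})"
proof -
  have "unital_alg smult mul one"
    using alg unfolding unital_algebra_def unital_alg_def unital_alg_axioms_def by blast
  then interpret unital_alg smult mul one .
  obtain gens where S: "S = set gens" using finite_list[OF finS] by blast
  interpret unital_alg_gens smult mul one gens
    by unfold_locales (use one_neq_zero_if_dim_nonzero n_def n2 in auto)
  obtain K where "L K = UNIV" using gen unfolding generates_def S by blast
  then show ?thesis unfolding S by (rule characteristic_basis[OF _ n_def k1[unfolded S]])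
qed

end
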